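(* Consider the all-but-one private sequencing scheme described in the context, with $M\ge 2$ unknown individuals, $K$ known individuals, $S=M$ sequencers, constant coverage depth $\alpha\in\mathbb{N}$ and per-read error probability $\eta\in(0,1)$, $\eta\neq 1/2$. Let $\epsilon\in(0,1)$. If $$\frac{\alpha}{M+K-1}\;\ge\;\frac{8\eta(1-\eta)}{(1-2\eta)^2}\,\ln\!\left(\frac{2^M}{\epsilon}\right),$$ then the reconstruction condition holds: the data collector's estimate $\hat{\mathbf{x}}_n$ satisfies $\mathbb{P}(\hat{\mathbf{x}}_n\neq\mathbf{x}_n)\le\epsilon$ for every SNP position $n\in[N]$.
   Context: Setting. There are $M$ unknown individuals and $K$ known individuals, $N$ SNP positions, and $S=M$ non-colluding sequencers. The genome of unknown individual $m$ at SNP position $n$ is $X_{m,n}\in\{-1,1\}$ (major allele $=1$, minor $=-1$), and $\mathbf{x}_n=(X_{1,n},\dots,X_{M,n})^T$. The known individuals' alleles $y_{k,n}\in\{-1,1\}$ are known to the data collector. In the all-but-one scheme, sequencer $s$ receives (pooled, untagged) DNA fragments of all unknown individuals except individual $s$ and of all $K$ known individuals; each fragment contains exactly one SNP and is correctly mapped to its position; each individual $m\neq s$ and each known individual has exactly $\alpha$ fragments covering each SNP position at sequencer $s$ (constant coverage depth $\alpha$). Each sequencer reads every allele in every fragment independently with error probability $\eta$ (flipping $1\leftrightarrow-1$) and reports the reads to the data collector. Model of the data collector's observations used by the paper: after scaling the sum of reads at position $n$ from sequencer $s$ by $1/(\alpha(1-2\eta))$ and subtracting $\sum_k y_{k,n}$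 (with the Gaussian/central-limit approximation of the read noise), the data collector observes $$\mathbf{g}_n=\mathbf{H}\mathbf{x}_n+\mathbf{z}_n,\qquad \mathbf{H}=\mathbf{1}_{M\times M}-\mathbf{I}_{M\times M},$$ where $\mathbf{1}$ is the all-ones matrix, $\mathbf{z}_n\sim\mathcal{N}(0,\sigma^2\mathbf{I})$ is independent of $\mathbf{x}_n$, and $\sigma^2=\frac{4(M+K-1)}{\alpha}\frac{\eta(1-\eta)}{(1-2\eta)^2}$. The data collector estimates $\hat{\mathbf{x}}_n=\arg\min_{\mathbf{u}\in\{-1,1\}^M}\|\mathbf{g}_n-\mathbf{H}\mathbf{u}\|_2$. *)

theory Defs
  imports "HOL-Probability.Probability"
begin

text \<open>Vectors in R^M are functions nat => real, extensional outside {..<M}.\<close>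

definition sign_vectors :: "nat \<Rightarrow> (nat \<Rightarrow> real) set" where
  "sign_vectors M = PiE {..<M} (\<lambda>_. {-1, 1})"

text \<open>Matrix H = 1_{MxM} - I_{MxM} applied to a vector u.\<close>
definition Hmul :: "nat \<Rightarrow> (nat \<Rightarrow> real) \<Rightarrow> (nat \<Rightarrow> real)" where
  "Hmul M u = (\<lambda>i. if i < M then (\<Sum>j<M. u j) - u i else 0)"

definition sqdist :: "nat \<Rightarrow> (nat \<Rightarrow> real) \<Rightarrow> (nat \<Rightarrow> real) \<Rightarrow> real" where
  "sqdist M a b = (\<Sum>i<M. (a i - b i)\<^sup>2)"

definition noise_var :: "nat \<Rightarrow> nat \<Rightarrow> nat \<Rightarrow> real \<Rightarrow> real" where
  "noise_var M K \<alpha> \<eta> = 4 * (real (M + K) - 1) / real \<alpha> * (\<eta> * (1 - \<eta>) / (1 - 2 * \<eta>)\<^sup>2)"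

text \<open>Distribution of the noise z ~ N(0, sigma^2 I) on R^M (sigma = standard deviation).\<close>
definition noise_measure :: "nat \<Rightarrow> real \<Rightarrow> (nat \<Rightarrow> real) measure" where
  "noise_measure M \<sigma> = PiM {..<M} (\<lambda>_. density lborel (normal_density 0 \<sigma>))"

definition observation :: "nat \<Rightarrow> (nat \<Rightarrow> real) \<Rightarrow> (nat \<Rightarrow> real) \<Rightarrow> (nat \<Rightarrow> real)" where
  "observation M x z = (\<lambda>i. Hmul M x i + z i)"

text \<open>Decoding error event of the minimum-distance estimator
  argmin_{u in {-1,1}^M} ||g - H u||: the error event {x_hat /= x} occurs
  (for some choice of minimiser) iff the true x is not the unique minimiser.\<close>
definition decoding_error_event :: "nat \<Rightarrow> (nat \<Rightarrow> real) \<Rightarrow> (nat \<Rightarrow> real) set" where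
  "decoding_error_event M x =
     {z \<in> space (PiM {..<M} (\<lambda>_. lborel :: real measure)).
        \<exists>u \<in> sign_vectors M. u \<noteq> x \<and>
          sqdist M (observation M x z) (Hmul M u) \<le> sqdist M (observation M x z) (Hmul M x)}"

end

theory Submission
  imports Defs
begin

text \<open>Confusing x with a candidate u \<noteq> x requires the Gaussian noise to carry the observation
  at least halfway from H x towards H u: a linear form of z with variance \<sigma>^2 |H(x - u)|^2 has to
  drop below -|H(x - u)|^2 / 2, which by the Chernoff bound has probability at most
  exp (-|H(x - u)|^2 / (8 \<sigma>^2)). For M \<ge> 2 the matrix H = 1 - I does not shrink distances,
  since |H w|^2 = (M - 2) (\<Sum>w)^2 + |w|^2, so |H(x - u)|^2 \<ge> |x - u|^2 \<ge> 4. A union bound over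
  the 2^M - 1 wrong candidates leaves at most 2^M exp (-1 / (2 \<sigma>^2)), and the coverage condition
  says precisely that this is at most \<epsilon>.\<close>

lemma nn_integral_exp_normal_density:
  fixes \<sigma> s :: real
  assumes "0 < \<sigma>"
  shows "(\<integral>\<^sup>+y. ennreal (exp (s * y)) \<partial>density lborel (normal_density 0 \<sigma>))
    = ennreal (exp (s\<^sup>2 * \<sigma>\<^sup>2 / 2))"
proof -
  have shift: "normal_density 0 \<sigma> y * exp (s * y) = exp (s\<^sup>2 * \<sigma>\<^sup>2 / 2) * normal_density (s * \<sigma>\<^sup>2) \<sigma> y"
    for y
  proof -
    have "-(y - 0)\<^sup>2 / (2 * \<sigma>\<^sup>2) + s * y = s\<^sup>2 * \<sigma>\<^sup>2 / 2 + -(y - s * \<sigma>\<^sup>2)\<^sup>2 / (2 * \<sigma>\<^sup>2)"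
      using assms by (simp add: field_simps power2_eq_square)
    then show ?thesis
      unfolding normal_density_def by (simp add: mult_exp_exp algebra_simps)
  qed
  interpret shifted: prob_space "density lborel (normal_density (s * \<sigma>\<^sup>2) \<sigma>)"
    using assms by (rule prob_space_normal_density)
  have "(\<integral>\<^sup>+y. ennreal (exp (s * y)) \<partial>density lborel (normal_density 0 \<sigma>))
      = (\<integral>\<^sup>+y. ennreal (exp (s\<^sup>2 * \<sigma>\<^sup>2 / 2)) * ennreal (normal_density (s * \<sigma>\<^sup>2) \<sigma> y) \<partial>lborel)"
    by (simp add: nn_integral_density ennreal_mult'[symmetric] shift)
  also have "\<dots> = ennreal (exp (s\<^sup>2 * \<sigma>\<^sup>2 / 2))
      * emeasure (density lborel (normal_density (s * \<sigma>\<^sup>2) \<sigma>)) UNIV"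
    by (simp add: nn_integral_cmult emeasure_density)
  finally show ?thesis
    using shifted.emeasure_space_1 by simp
qed

lemma nn_integral_exp_linear_form_normal:
  fixes \<sigma> :: real and I :: "'i set" and c :: "'i \<Rightarrow> real"
  assumes "0 < \<sigma>" "finite I"
  shows "(\<integral>\<^sup>+z. ennreal (exp (\<Sum>i\<in>I. c i * z i)) \<partial>PiM I (\<lambda>_. density lborel (normal_density 0 \<sigma>)))
    = ennreal (exp (\<sigma>\<^sup>2 / 2 * (\<Sum>i\<in>I. (c i)\<^sup>2)))"
proof -
  let ?N = "density lborel (normal_density 0 \<sigma>)"
  interpret N: prob_space ?N
    using assms(1) by (rule prob_space_normal_density)
  interpret product_sigma_finite "\<lambda>_::'i. ?N"
    by unfold_locales
  have "(\<integral>\<^sup>+z. ennreal (exp (\<Sum>i\<in>I. c i * z i)) \<partial>PiM I (\<lambda>_. ?N))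
      = (\<integral>\<^sup>+z. (\<Prod>i\<in>I. ennreal (exp (c i * z i))) \<partial>PiM I (\<lambda>_. ?N))"
    using assms(2) by (subst prod_ennreal) (auto simp: exp_sum)
  also have "\<dots> = (\<Prod>i\<in>I. \<integral>\<^sup>+y. ennreal (exp (c i * y)) \<partial>?N)"
    using assms(2) by (intro product_nn_integral_prod) auto
  also have "\<dots> = (\<Prod>i\<in>I. ennreal (exp ((c i)\<^sup>2 * \<sigma>\<^sup>2 / 2)))"
    using assms(1) by (simp add: nn_integral_exp_normal_density)
  also have "\<dots> = ennreal (exp (\<sigma>\<^sup>2 / 2 * (\<Sum>i\<in>I. (c i)\<^sup>2)))"
    using assms(2) by (simp add: prod_ennreal exp_sum sum_distrib_left sum_divide_distrib mult.commute)
  finally show ?thesis .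
qed

lemma sets_PiM_normal_density:
  "sets (PiM I (\<lambda>_. density lborel (normal_density \<mu> \<sigma>))) = sets (PiM I (\<lambda>_. lborel :: real measure))"
  by (rule sets_PiM_cong) auto

lemma emeasure_linear_form_le_normal:
  fixes \<sigma> t a :: real and I :: "'i set" and d :: "'i \<Rightarrow> real"
  assumes "0 < \<sigma>" "finite I" "0 \<le> t"
  shows "emeasure (PiM I (\<lambda>_. density lborel (normal_density 0 \<sigma>)))
      {z \<in> space (PiM I (\<lambda>_. lborel)). (\<Sum>i\<in>I. d i * z i) \<le> - a}
    \<le> ennreal (exp (\<sigma>\<^sup>2 * t\<^sup>2 / 2 * (\<Sum>i\<in>I. (d i)\<^sup>2) - t * a))"
proof -
  let ?P = "PiM I (\<lambda>_. density lborel (normal_density 0 \<sigma>))"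
  let ?A = "{z \<in> space (PiM I (\<lambda>_. lborel)). (\<Sum>i\<in>I. d i * z i) \<le> - a}"
  have "?A \<in> sets (PiM I (\<lambda>_. lborel))"
    by measurable
  then have "emeasure ?P ?A = (\<integral>\<^sup>+z. indicator ?A z \<partial>?P)"
    by (simp add: sets_PiM_normal_density)
  also have "\<dots> \<le> (\<integral>\<^sup>+z. ennreal (exp (- t * a)) * ennreal (exp (\<Sum>i\<in>I. (- t * d i) * z i)) \<partial>?P)"
  proof (rule nn_integral_mono)
    fix z
    have "t * (a + (\<Sum>i\<in>I. d i * z i)) \<le> 0" if "z \<in> ?A"
      using that assms(3) by (simp add: mult_nonneg_nonpos)
    then have "z \<in> ?A \<Longrightarrow> 1 \<le> exp (- t * a) * exp (\<Sum>i\<in>I. (- t * d i) * z i)"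
      by (simp add: mult_exp_exp sum_distrib_left sum_negf algebra_simps)
    then show "indicator ?A z \<le> ennreal (exp (- t * a)) * ennreal (exp (\<Sum>i\<in>I. (- t * d i) * z i))"
      by (auto simp: indicator_def ennreal_mult'[symmetric])
  qed
  also have "\<dots> = ennreal (exp (- t * a)) * ennreal (exp (\<sigma>\<^sup>2 / 2 * (\<Sum>i\<in>I. (- t * d i)\<^sup>2)))"
    using nn_integral_exp_linear_form_normal[OF assms(1,2), of "\<lambda>i. - t * d i"]
    by (simp add: nn_integral_cmult)
  also have "\<dots> = ennreal (exp (\<sigma>\<^sup>2 * t\<^sup>2 / 2 * (\<Sum>i\<in>I. (d i)\<^sup>2) - t * a))"
    by (simp add: ennreal_mult'[symmetric] mult_exp_exp sum_distrib_left algebra_simps)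
  finally show ?thesis .
qed

lemma finite_sign_vectors: "finite (sign_vectors M)"
  unfolding sign_vectors_def by (rule finite_PiE) auto

lemma card_sign_vectors: "card (sign_vectors M) = 2 ^ M"
  unfolding sign_vectors_def by (simp add: card_PiE numeral_2_eq_2)

lemma sqdist_sign_vectors_ge:
  assumes "u \<in> sign_vectors M" "v \<in> sign_vectors M" "u \<noteq> v"
  shows "4 \<le> sqdist M u v"
proof -
  obtain j where j: "j < M" "u j \<noteq> v j"
    using assms unfolding sign_vectors_def by (metis PiE_ext lessThan_iff)
  moreover have "u j \<in> {-1, 1}" "v j \<in> {-1, 1}"
    using assms(1,2) j(1) unfolding sign_vectors_def by auto
  ultimately have "(u j - v j)\<^sup>2 = 4"
    by auto
  moreover have "(u j - v j)\<^sup>2 \<le> sqdist M u v"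
    unfolding sqdist_def by (rule member_le_sum) (use j in auto)
  ultimately show ?thesis
    by simp
qed

lemma sqdist_le_sqdist_Hmul:
  assumes "2 \<le> M"
  shows "sqdist M u v \<le> sqdist M (Hmul M u) (Hmul M v)"
proof -
  define w where "w i = u i - v i" for i
  define S where "S = (\<Sum>j<M. w j)"
  have "sqdist M (Hmul M u) (Hmul M v) = (\<Sum>i<M. (S - w i)\<^sup>2)"
    unfolding sqdist_def Hmul_def S_def w_def by (intro sum.cong) (auto simp: sum_subtractf algebra_simps)
  also have "\<dots> = (\<Sum>i<M. S\<^sup>2 - 2 * S * w i + (w i)\<^sup>2)"
    by (rule sum.cong) (auto simp: power2_eq_square algebra_simps)
  also have "\<dots> = real M * S\<^sup>2 - 2 * S * S + sqdist M u v"
    unfolding sqdist_def w_def[symmetric]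
    by (simp add: sum.distrib sum_subtractf sum_distrib_left[symmetric] S_def)
  also have "\<dots> = (real M - 2) * S\<^sup>2 + sqdist M u v"
    by (simp add: power2_eq_square algebra_simps)
  finally show ?thesis
    using assms by simp
qed

lemma sqdist_shift_diff:
  "sqdist M (\<lambda>i. a i + z i) b - sqdist M (\<lambda>i. a i + z i) a
    = sqdist M a b + 2 * (\<Sum>i<M. (a i - b i) * z i)"
proof -
  have "sqdist M (\<lambda>i. a i + z i) b - sqdist M (\<lambda>i. a i + z i) a
      = (\<Sum>i<M. (a i - b i)\<^sup>2 + 2 * ((a i - b i) * z i))"
    unfolding sqdist_def sum_subtractf[symmetric] by (rule sum.cong) (auto simp: power2_eq_square algebra_simps)
  then show ?thesis
    unfolding sqdist_def by (simp add: sum.distrib sum_distrib_left)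
qed

definition pairwise_error_event :: "nat \<Rightarrow> (nat \<Rightarrow> real) \<Rightarrow> (nat \<Rightarrow> real) \<Rightarrow> (nat \<Rightarrow> real) set" where
  "pairwise_error_event M x u =
     {z \<in> space (PiM {..<M} (\<lambda>_. lborel :: real measure)).
        sqdist M (observation M x z) (Hmul M u) \<le> sqdist M (observation M x z) (Hmul M x)}"

lemma decoding_error_event_eq_Union:
  "decoding_error_event M x = (\<Union>u \<in> sign_vectors M - {x}. pairwise_error_event M x u)"
  unfolding decoding_error_event_def pairwise_error_event_def by blast

lemma sets_noise_measure: "sets (noise_measure M \<sigma>) = sets (PiM {..<M} (\<lambda>_. lborel :: real measure))"
  unfolding noise_measure_def by (rule sets_PiM_normal_density)

lemma pairwise_error_event_eq:
  "pairwise_error_event M x u =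
     {z \<in> space (PiM {..<M} (\<lambda>_. lborel)).
        (\<Sum>i<M. (Hmul M x i - Hmul M u i) * z i) \<le> - (sqdist M (Hmul M x) (Hmul M u) / 2)}"
proof -
  have "sqdist M (observation M x z) (Hmul M u) \<le> sqdist M (observation M x z) (Hmul M x)
      \<longleftrightarrow> (\<Sum>i<M. (Hmul M x i - Hmul M u i) * z i) \<le> - (sqdist M (Hmul M x) (Hmul M u) / 2)" for z
    using sqdist_shift_diff[of M "Hmul M x" z "Hmul M u"] unfolding observation_def by linarith
  then show ?thesis
    unfolding pairwise_error_event_def by blast
qed

lemma sets_pairwise_error_event: "pairwise_error_event M x u \<in> sets (noise_measure M \<sigma>)"
  unfolding pairwise_error_event_eq sets_noise_measure by measurable

lemma emeasure_pairwise_error_event_le: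
  assumes "0 < \<sigma>" "2 \<le> M" "x \<in> sign_vectors M" "u \<in> sign_vectors M" "u \<noteq> x"
  shows "emeasure (noise_measure M \<sigma>) (pairwise_error_event M x u) \<le> ennreal (exp (- 1 / (2 * \<sigma>\<^sup>2)))"
proof -
  define D where "D = sqdist M (Hmul M x) (Hmul M u)"
  have "4 \<le> D"
    unfolding D_def using sqdist_le_sqdist_Hmul[OF assms(2)] sqdist_sign_vectors_ge[OF assms(3-4)] assms(5)
    by (metis order.trans)
  \<comment> \<open>t = 1 / (2 \<sigma>^2) is the optimal Chernoff parameter for the threshold D / 2\<close>
  have "emeasure (noise_measure M \<sigma>) (pairwise_error_event M x u)
      \<le> ennreal (exp (\<sigma>\<^sup>2 * (1 / (2 * \<sigma>\<^sup>2))\<^sup>2 / 2 * D - 1 / (2 * \<sigma>\<^sup>2) * (D / 2)))"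
    using emeasure_linear_form_le_normal[OF assms(1) finite_lessThan,
        where t = "1 / (2 * \<sigma>\<^sup>2)" and a = "D / 2" and d = "\<lambda>i. Hmul M x i - Hmul M u i"]
    unfolding pairwise_error_event_eq noise_measure_def D_def sqdist_def by simp
  also have "\<sigma>\<^sup>2 * (1 / (2 * \<sigma>\<^sup>2))\<^sup>2 / 2 * D - 1 / (2 * \<sigma>\<^sup>2) * (D / 2) = - D / (8 * \<sigma>\<^sup>2)"
    using assms(1) by (simp add: field_simps power2_eq_square)
  also have "ennreal (exp \<dots>) \<le> ennreal (exp (- 1 / (2 * \<sigma>\<^sup>2)))"
    using \<open>4 \<le> D\<close> assms(1) by (auto intro!: ennreal_leI simp: field_simps)
  finally show ?thesis .
qed

lemma prob_space_noise_measure: "0 < \<sigma> \<Longrightarrow> prob_space (noise_measure M \<sigma>)"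
  unfolding noise_measure_def by (intro prob_space_PiM prob_space_normal_density)

lemma sets_decoding_error_event: "decoding_error_event M x \<in> sets (noise_measure M \<sigma>)"
  unfolding decoding_error_event_eq_Union
  using finite_sign_vectors sets_pairwise_error_event by blast

lemma measure_decoding_error_event_le:
  assumes "0 < \<sigma>" "2 \<le> M" "x \<in> sign_vectors M"
  shows "measure (noise_measure M \<sigma>) (decoding_error_event M x) \<le> (2 ^ M - 1) * exp (- 1 / (2 * \<sigma>\<^sup>2))"
proof -
  interpret prob_space "noise_measure M \<sigma>"
    using assms(1) by (rule prob_space_noise_measure)
  have card: "real (card (sign_vectors M - {x})) = 2 ^ M - 1"
    using assms(3) finite_sign_vectors by (simp add: card_Diff_singleton card_sign_vectors)
  have "emeasure (noise_measure M \<sigma>) (decoding_error_event M x)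
      \<le> (\<Sum>u \<in> sign_vectors M - {x}. emeasure (noise_measure M \<sigma>) (pairwise_error_event M x u))"
    unfolding decoding_error_event_eq_Union
    using finite_sign_vectors sets_pairwise_error_event by (intro emeasure_subadditive_finite) auto
  also have "\<dots> \<le> (\<Sum>u \<in> sign_vectors M - {x}. ennreal (exp (- 1 / (2 * \<sigma>\<^sup>2))))"
    using emeasure_pairwise_error_event_le[OF assms] by (intro sum_mono) auto
  also have "\<dots> = ennreal (real (card (sign_vectors M - {x})) * exp (- 1 / (2 * \<sigma>\<^sup>2)))"
    by (simp add: ennreal_of_nat_eq_real_of_nat ennreal_mult)
  also have "\<dots> = ennreal ((2 ^ M - 1) * exp (- 1 / (2 * \<sigma>\<^sup>2)))"
    by (simp only: card)
  finally show ?thesis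
    by (simp add: emeasure_eq_measure)
qed

lemma inverse_noise_var:
  "1 / (2 * noise_var M K \<alpha> \<eta>) = real \<alpha> / (real (M + K) - 1) / (8 * \<eta> * (1 - \<eta>) / (1 - 2 * \<eta>)\<^sup>2)"
  unfolding noise_var_def by (simp add: field_split_simps)

lemma coverage_condition_le_inverse_noise_var:
  assumes "0 < \<eta>" "\<eta> < 1" "\<eta> \<noteq> 1/2"
    and "8 * \<eta> * (1 - \<eta>) / (1 - 2 * \<eta>)\<^sup>2 * L \<le> real \<alpha> / (real (M + K) - 1)"
  shows "L \<le> 1 / (2 * noise_var M K \<alpha> \<eta>)"
proof -
  have "0 < 8 * \<eta> * (1 - \<eta>) / (1 - 2 * \<eta>)\<^sup>2"
    using assms(1-3) by simp
  then show ?thesis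
    using assms(4) unfolding inverse_noise_var by (metis pos_le_divide_eq mult.commute)
qed

theorem theorem1:
  fixes M K \<alpha> :: nat and \<eta> \<epsilon> :: real and x :: "nat \<Rightarrow> real"
  assumes "M \<ge> 2"
    and "0 < \<eta>" "\<eta> < 1" "\<eta> \<noteq> 1/2"
    and "0 < \<epsilon>" "\<epsilon> < 1"
    and "real \<alpha> / (real (M + K) - 1) \<ge> 8 * \<eta> * (1 - \<eta>) / (1 - 2 * \<eta>)\<^sup>2 * ln (2 ^ M / \<epsilon>)"
    and "x \<in> sign_vectors M"
  shows "decoding_error_event M x \<in> sets (noise_measure M (sqrt (noise_var M K \<alpha> \<eta>)))
    \<and> measure (noise_measure M (sqrt (noise_var M K \<alpha> \<eta>))) (decoding_error_event M x) \<le> \<epsilon>"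
proof -
  define \<sigma> where "\<sigma> = sqrt (noise_var M K \<alpha> \<eta>)"
  have "\<epsilon> < 2 ^ M"
    using assms(6) one_le_power[of "2::real" M] by linarith
  then have "0 < ln (2 ^ M / \<epsilon>)"
    using assms(5) by simp
  moreover have ln_le: "ln (2 ^ M / \<epsilon>) \<le> 1 / (2 * noise_var M K \<alpha> \<eta>)"
    using assms(2-4,7) by (rule coverage_condition_le_inverse_noise_var)
  ultimately have "0 < 1 / (2 * noise_var M K \<alpha> \<eta>)"
    by linarith
  then have "0 < noise_var M K \<alpha> \<eta>"
    by simp
  then have "0 < \<sigma>" and \<sigma>_sq: "\<sigma>\<^sup>2 = noise_var M K \<alpha> \<eta>"
    unfolding \<sigma>_def by simp_all
  have "exp (- 1 / (2 * \<sigma>\<^sup>2)) \<le> exp (- ln (2 ^ M / \<epsilon>))"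
    using ln_le unfolding \<sigma>_sq by simp
  also have "\<dots> = \<epsilon> / 2 ^ M"
    using assms(5) by (simp add: exp_minus)
  finally have "(2 ^ M - 1) * exp (- 1 / (2 * \<sigma>\<^sup>2)) \<le> (2 ^ M - 1) * (\<epsilon> / 2 ^ M)"
    by (rule mult_left_mono) simp
  also have "\<dots> \<le> \<epsilon>"
    using assms(5) by (simp add: field_simps)
  finally show ?thesis
    using measure_decoding_error_event_le[OF \<open>0 < \<sigma>\<close> assms(1,8)] sets_decoding_error_event
    unfolding \<sigma>_def by auto
qed

end
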